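(* Let $L$ be an interval locale, $F\in\mathbf{Mon}(L_{+})$, and $A,B\subseteq F$ subsheaves. Let $A\cup B$ denote the sheaf $L(A\cup B)$ associated to the sectionwise presheaf union. Then the square with $A\cap B\to A$, $A\cap B\to B$, $A\to A\cup B$, $B\to A\cup B$ is a pushout in $\mathbf{Mon}(L_{+})$, $(A\cup B)(i)=A(i)\cup B(i)$, and for every $y\in A(i)\cup B(i)$, $\psi_{A\cup B}(y)=\max\{\psi_A(y),\psi_B(y)\}$ (with $\psi_A(y)$ omitted if $y\notin A(i)$, and similarly for $B$).
   Context: A locale $L$ is a complete lattice in which finite meets distribute over arbitrary joins, with Grothendieck topology: $\{b_j\le a\}$ covers $a$ iff $\bigvee_j b_j=a$. $L$ is an interval if it is totally ordered and densely ordered. $i$ is the bottom element of $L$; $L_{+}=L\sqcup\{0\}$ with a new bottom $0<i$. $\mathbf{Mon}(L_{+})$ is the category of sheaves $F$ on $L_{+}$ with $F(b)\to F(a)$ injective for all $a\le b$ in $L$; regard $F(c)\subseteq F(i)$, and $\psi_F(x)=\sup\{b\in L: x\in F(b)\}$ for $x\in F(i)$. For a presheaf $F$ on $L_{+}$, $LF(a)=\varprojlim_{0<b<a}F(b)$ for $a\in L$, $a\neq i$, $LF(i)=F(i)$, $LF(0)=\ast$. *)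

theory Defs
  imports Main
begin

text \<open>
  Interval locale L: a type of class complete_linorder (complete lattice, totally
  ordered; such lattices automatically satisfy the frame distributive law) which
  is densely ordered (dense_order).  The bottom element i of L is bot.
  L_+ = L plus a new bottom 0 is modelled as the type 'l option, with None = 0.
\<close>

fun le_plus :: "'l::order option \<Rightarrow> 'l option \<Rightarrow> bool" where
  "le_plus None v = True"
| "le_plus (Some a) None = False"
| "le_plus (Some a) (Some b) = (a \<le> b)"

fun meet_plus :: "'l::linorder option \<Rightarrow> 'l option \<Rightarrow> 'l option" where
  "meet_plus None v = None"
| "meet_plus (Some a) None = None"
| "meet_plus (Some a) (Some b) = Some (min a b)"

definition covers :: "'l::order option set \<Rightarrow> 'l option \<Rightarrow> bool" where
  "covers S u \<longleftrightarrow> (\<forall>b\<in>S. le_plus b u) \<and> (\<forall>v. (\<forall>b\<in>S. le_plus b v) \<longrightarrow> le_plus u v)"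

definition is_sheaf_plus ::
  "('l::linorder option \<Rightarrow> 'y set) \<Rightarrow> ('l option \<Rightarrow> 'l option \<Rightarrow> 'y \<Rightarrow> 'y) \<Rightarrow> bool" where
  "is_sheaf_plus P res \<longleftrightarrow>
     (\<forall>u S s. covers S u \<longrightarrow> (\<forall>b\<in>S. s b \<in> P b) \<longrightarrow>
        (\<forall>b\<in>S. \<forall>b'\<in>S. res b (meet_plus b b') (s b) = res b' (meet_plus b b') (s b')) \<longrightarrow>
        (\<exists>!x. x \<in> P u \<and> (\<forall>b\<in>S. res u b x = s b)))"

definition nat_trans ::
  "('l::order option \<Rightarrow> 'y set) \<Rightarrow> ('l option \<Rightarrow> 'l option \<Rightarrow> 'y \<Rightarrow> 'y) \<Rightarrow>
   ('l option \<Rightarrow> 'w set) \<Rightarrow> ('l option \<Rightarrow> 'l option \<Rightarrow> 'w \<Rightarrow> 'w) \<Rightarrow>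
   ('l option \<Rightarrow> 'y \<Rightarrow> 'w) \<Rightarrow> bool" where
  "nat_trans P resP Q resQ \<eta> \<longleftrightarrow>
     (\<forall>u x. x \<in> P u \<longrightarrow> \<eta> u x \<in> Q u) \<and>
     (\<forall>u v x. le_plus v u \<longrightarrow> x \<in> P u \<longrightarrow> \<eta> v (resP u v x) = resQ u v (\<eta> u x))"

text \<open>Objects of Mon(L_+), following the paper's convention of regarding F(c) as a
  subset of F(i): an object is given by F :: 'l => 'x set (F c for c in L), with
  F b \<subseteq> F a for a \<le> b, the restriction maps being the inclusions (hence
  injective).  The sections over u in L_+ are represented as 'x option:
  Some x for x in F a over u = Some a, and the single section None over 0.\<close>
definition monP :: "('l \<Rightarrow> 'x set) \<Rightarrow> 'l option \<Rightarrow> 'x option set" where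
  "monP F u = (case u of None \<Rightarrow> {None} | Some a \<Rightarrow> Some ` F a)"

definition monRes :: "'l option \<Rightarrow> 'l option \<Rightarrow> 'x option \<Rightarrow> 'x option" where
  "monRes u v s = (if v = None then None else s)"

definition is_mon :: "('l::linorder \<Rightarrow> 'x set) \<Rightarrow> bool" where
  "is_mon F \<longleftrightarrow> (\<forall>a b. a \<le> b \<longrightarrow> F b \<subseteq> F a) \<and> is_sheaf_plus (monP F) monRes"

definition mon_hom :: "('l::linorder \<Rightarrow> 'x set) \<Rightarrow> ('l \<Rightarrow> 'z set) \<Rightarrow>
   ('l option \<Rightarrow> 'x option \<Rightarrow> 'z option) \<Rightarrow> bool" where
  "mon_hom F G \<eta> \<longleftrightarrow> nat_trans (monP F) monRes (monP G) monRes \<eta>"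

definition mon_hom_eq :: "('l \<Rightarrow> 'x set) \<Rightarrow>
   ('l option \<Rightarrow> 'x option \<Rightarrow> 'z option) \<Rightarrow> ('l option \<Rightarrow> 'x option \<Rightarrow> 'z option) \<Rightarrow> bool" where
  "mon_hom_eq F \<eta> \<theta> \<longleftrightarrow> (\<forall>u. \<forall>x\<in>monP F u. \<eta> u x = \<theta> u x)"

definition subsheaf :: "('l::linorder \<Rightarrow> 'x set) \<Rightarrow> ('l \<Rightarrow> 'x set) \<Rightarrow> bool" where
  "subsheaf A F \<longleftrightarrow> is_mon A \<and> (\<forall>a. A a \<subseteq> F a)"

definition sec_inter :: "('l \<Rightarrow> 'x set) \<Rightarrow> ('l \<Rightarrow> 'x set) \<Rightarrow> 'l \<Rightarrow> 'x set" where
  "sec_inter A B a = A a \<inter> B a"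

text \<open>The operator L applied to a presheaf P with injective (inclusion) restriction
  maps: LP(i) = P(i), and for a \<noteq> i, LP(a) = lim_{0<b<a} P(b), where the inverse limit
  of the chain of inclusions is identified (as in the paper) with the subset
  of P(i) of elements lying in every P(b), i \<le> b < a.\<close>
definition Lop :: "('l::{complete_linorder} \<Rightarrow> 'x set) \<Rightarrow> 'l \<Rightarrow> 'x set" where
  "Lop P a = (if a = bot then P bot else {x. \<forall>b. b < a \<longrightarrow> x \<in> P b})"

definition sheaf_union :: "('l::complete_linorder \<Rightarrow> 'x set) \<Rightarrow> ('l \<Rightarrow> 'x set) \<Rightarrow> 'l \<Rightarrow> 'x set" where
  "sheaf_union A B = Lop (\<lambda>b. A b \<union> B b)"

definition psi :: "('l::complete_lattice \<Rightarrow> 'x set) \<Rightarrow> 'x \<Rightarrow> 'l" where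
  "psi F x = Sup {b. x \<in> F b}"

definition incl :: "'l option \<Rightarrow> 'x option \<Rightarrow> 'x option" where
  "incl u x = x"

end

theory Submission
  imports Defs
begin

text \<open>Since all restriction maps are inclusions, the sheaf condition on \<open>L\<^sub>+\<close> says exactly
  that \<open>F\<close> is antitone and \<open>F (\<Squnion>T) = (\<Inter>c\<in>T. F c)\<close> for nonempty \<open>T\<close>.  For the presheaf union the one nontrivial point is at \<open>a \<noteq> \<bottom>\<close>: if a
  section lies in \<open>A b \<union> B b\<close> for all \<open>b < a\<close>, then either it lies in \<open>A b\<close> for \<open>b\<close>
  cofinal below \<open>a\<close>, or it lies in \<open>B b\<close> on a whole interval \<open>]s, a[\<close>, whose supremum is
  \<open>a\<close> by density.  Hence \<open>L(A \<union> B)\<close> is the sectionwise union, the pushout is glued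
  by cases, and \<open>\<psi>\<close> of a union is the maximum of the two suprema.\<close>

lemma covers_Some_Sup:
  fixes T :: "'l::complete_lattice set"
  assumes "T \<noteq> {}"
  shows "covers (Some ` T) (Some (Sup T))"
  unfolding covers_def
proof (intro conjI allI impI ballI)
  fix v assume ub: "\<forall>b\<in>Some ` T. le_plus b v"
  obtain w where v: "v = Some w"
    using assms ub by (cases v) auto
  with ub show "le_plus (Some (Sup T)) v"
    by (simp add: Sup_le_iff)
qed (auto intro: Sup_upper)

lemma covers_None: "covers S None \<Longrightarrow> S \<subseteq> {None}"
proof
  fix b assume "covers S None" and "b \<in> S"
  then have "le_plus b None"
    by (simp add: covers_def)
  then show "b \<in> {None}"
    by (cases b) auto
qed

lemma covers_Some:
  fixes a :: "'l::complete_lattice"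
  assumes cov: "covers S (Some a)"
  shows "{c. Some c \<in> S} \<noteq> {}" and "Sup {c. Some c \<in> S} = a"
proof -
  define T where "T = {c. Some c \<in> S}"
  have "le_plus b (Some (Sup T))" if "b \<in> S" for b
    using that by (cases b) (auto simp: T_def intro: Sup_upper)
  then have "a \<le> Sup T"
    using cov unfolding covers_def by fastforce
  moreover have "Sup T \<le> a"
    using cov unfolding covers_def T_def by (force intro: Sup_least)
  ultimately show "Sup {c. Some c \<in> S} = a"
    unfolding T_def by (rule antisym[symmetric])
  show "{c. Some c \<in> S} \<noteq> {}"
  proof
    assume "{c. Some c \<in> S} = {}"
    then have "le_plus b None" if "b \<in> S" for b
      using that by (cases b) auto
    with cov show False
      unfolding covers_def by fastforce
  qed
qed

lemma is_sheaf_plusD: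
  assumes "is_sheaf_plus P res" and "covers S u" and "\<forall>b\<in>S. s b \<in> P b"
    and "\<forall>b\<in>S. \<forall>b'\<in>S. res b (meet_plus b b') (s b) = res b' (meet_plus b b') (s b')"
  shows "\<exists>!x. x \<in> P u \<and> (\<forall>b\<in>S. res u b x = s b)"
  using assms unfolding is_sheaf_plus_def by blast

lemma is_mon_antimono: "is_mon F \<Longrightarrow> antimono F"
  by (auto simp: is_mon_def antimono_def)

lemma is_mon_INT_subset:
  fixes F :: "'l::complete_linorder \<Rightarrow> 'x set"
  assumes "is_mon F" and "T \<noteq> {}"
  shows "(\<Inter>c\<in>T. F c) \<subseteq> F (Sup T)"
proof
  fix y assume y: "y \<in> (\<Inter>c\<in>T. F c)"
  have "is_sheaf_plus (monP F) monRes"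
    using assms(1) by (simp add: is_mon_def)
  then have "\<exists>!x. x \<in> monP F (Some (Sup T)) \<and> (\<forall>b\<in>Some ` T. monRes (Some (Sup T)) b x = Some y)"
    by (rule is_sheaf_plusD[OF _ covers_Some_Sup[OF assms(2)]])
      (use y in \<open>auto simp: monP_def monRes_def\<close>)
  then obtain x where "x \<in> monP F (Some (Sup T))" and "\<forall>b\<in>Some ` T. monRes (Some (Sup T)) b x = Some y"
    by blast
  with assms(2) show "y \<in> F (Sup T)"
    by (auto simp: monP_def monRes_def)
qed

text \<open>A compatible family over a cover of \<open>Some a\<close> is one section \<open>y\<close> of every \<open>F c\<close> in
  the cover, glued by \<open>F a = (\<Inter>c. F c)\<close>.\<close>
lemma is_monI:
  fixes F :: "'l::complete_linorder \<Rightarrow> 'x set"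
  assumes anti: "antimono F"
    and INT: "\<And>T. T \<noteq> {} \<Longrightarrow> (\<Inter>c\<in>T. F c) \<subseteq> F (Sup T)"
  shows "is_mon F"
  unfolding is_mon_def is_sheaf_plus_def
proof (intro conjI allI impI)
  show "a \<le> b \<Longrightarrow> F b \<subseteq> F a" for a b
    using anti by (rule antimonoD)
next
  fix u and S :: "'l option set" and s
  assume cov: "covers S u" and sP: "\<forall>b\<in>S. s b \<in> monP F b"
    and comp: "\<forall>b\<in>S. \<forall>b'\<in>S. monRes b (meet_plus b b') (s b) = monRes b' (meet_plus b b') (s b')"
  show "\<exists>!x. x \<in> monP F u \<and> (\<forall>b\<in>S. monRes u b x = s b)"
  proof (cases u)
    case None
    have "s b = None" if "b \<in> S" for b
    proof -
      have "b = None"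
        using covers_None[of S] cov None that by auto
      with sP that show ?thesis
        by (auto simp: monP_def)
    qed
    with None show ?thesis
      by (auto simp: monP_def monRes_def)
  next
    case (Some a)
    define T where "T = {c. Some c \<in> S}"
    have Tne: "T \<noteq> {}" and supT: "Sup T = a"
      using covers_Some cov Some unfolding T_def by blast+
    then obtain c0 where c0: "Some c0 \<in> S"
      unfolding T_def by blast
    obtain y where y: "s (Some c0) = Some y"
      using sP[rule_format, OF c0] by (auto simp: monP_def)
    have sc: "s (Some c) = Some y" if "Some c \<in> S" for c
      using comp[rule_format, OF that c0] y by (simp add: monRes_def)
    have "y \<in> F c" if "c \<in> T" for c
      using sP[rule_format, of "Some c"] sc[of c] that unfolding T_def by (auto simp: monP_def)
    then have "y \<in> F a"
      using INT[OF Tne] supT by blast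
    moreover have "monRes u b (Some y) = s b" if "b \<in> S" for b
      using that sP sc by (cases b) (auto simp: monRes_def monP_def)
    moreover have "x = Some y" if "\<forall>b\<in>S. monRes u b x = s b" for x
      using that c0 y by (auto simp: monRes_def)
    ultimately show ?thesis
      using Some by (intro ex1I[of _ "Some y"]) (auto simp: monP_def)
  qed
qed

lemma is_mon_iff:
  "is_mon F \<longleftrightarrow> antimono F \<and> (\<forall>T. T \<noteq> {} \<longrightarrow> (\<Inter>c\<in>T. F c) \<subseteq> F (Sup T))"
  for F :: "'l::complete_linorder \<Rightarrow> 'x set"
proof (intro iffI conjI allI impI)
  show "is_mon F \<Longrightarrow> antimono F"
    by (rule is_mon_antimono)
  show "is_mon F \<Longrightarrow> T \<noteq> {} \<Longrightarrow> (\<Inter>c\<in>T. F c) \<subseteq> F (Sup T)" for T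
    by (rule is_mon_INT_subset)
qed (auto intro: is_monI)

lemma is_mon_sec_inter:
  fixes A B :: "'l::complete_linorder \<Rightarrow> 'x set"
  assumes "is_mon A" and "is_mon B"
  shows "is_mon (sec_inter A B)"
proof -
  have "antimono (sec_inter A B)"
    using is_mon_antimono[OF assms(1)] is_mon_antimono[OF assms(2)]
    by (intro antimonoI) (auto simp: sec_inter_def dest: antimonoD)
  moreover have "(\<Inter>c\<in>T. sec_inter A B c) \<subseteq> sec_inter A B (Sup T)" if "T \<noteq> {}" for T
    using is_mon_INT_subset[OF assms(1) that] is_mon_INT_subset[OF assms(2) that]
    by (auto simp: sec_inter_def)
  ultimately show ?thesis
    by (simp add: is_mon_iff)
qed

text \<open>The library's \<open>Sup_greaterThanLessThan\<close> is stated for sort \<open>dense_linorder\<close>, which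
  the sort \<open>{complete_linorder, dense_order}\<close> is not registered as.\<close>
lemma Sup_greaterThanLessThan_dense:
  fixes x y :: "'l::{complete_linorder, dense_order}"
  assumes "x < y"
  shows "Sup {x<..<y} = y"
proof (rule Sup_eqI)
  fix w assume ub: "\<And>z. z \<in> {x<..<y} \<Longrightarrow> z \<le> w"
  show "y \<le> w"
  proof (rule ccontr)
    assume "\<not> y \<le> w"
    with assms have "max x w < y"
      by simp
    then obtain z where z: "max x w < z" "z < y"
      using dense by blast
    then have "z \<le> w"
      by (intro ub) simp
    with z show False
      by (auto dest: leD)
  qed
qed (simp add: less_imp_le)

lemma mem_union_if_mem_union_below:
  fixes A B :: "'l::{complete_linorder, dense_order} \<Rightarrow> 'x set"
  assumes A: "is_mon A" and B: "is_mon B" and "a \<noteq> bot"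
    and below: "\<forall>b<a. y \<in> A b \<union> B b"
  shows "y \<in> A a \<union> B a"
proof -
  define s where "s = Sup {b. b < a \<and> y \<in> A b}"
  have "s \<le> a"
    unfolding s_def by (auto intro: Sup_least)
  then consider "s = a" | "s < a"
    unfolding le_less by blast
  then show ?thesis
  proof cases
    case 1
    have "{b. b < a \<and> y \<in> A b} \<noteq> {}"
    proof
      assume "{b. b < a \<and> y \<in> A b} = {}"
      then have "s = bot"
        unfolding s_def by (simp only: Sup_empty)
      with 1 \<open>a \<noteq> bot\<close> show False
        by simp
    qed
    from is_mon_INT_subset[OF A this] have "y \<in> A s"
      unfolding s_def by auto
    with 1 show ?thesis by simp
  next
    case 2
    have "y \<in> B c" if "c \<in> {s<..<a}" for c
    proof -
      have "y \<notin> A c"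
      proof
        assume "y \<in> A c"
        with that have "c \<le> s"
          unfolding s_def by (auto intro: Sup_upper)
        with that show False
          by (auto dest: leD)
      qed
      with below that show ?thesis by auto
    qed
    moreover have "{s<..<a} \<noteq> {}"
      using dense[OF 2] greaterThanLessThan_iff by blast
    ultimately have "y \<in> B (Sup {s<..<a})"
      using is_mon_INT_subset[OF B] by blast
    with 2 show ?thesis
      by (simp add: Sup_greaterThanLessThan_dense)
  qed
qed

lemma sheaf_union_eq:
  fixes A B :: "'l::{complete_linorder, dense_order} \<Rightarrow> 'x set"
  assumes "is_mon A" and "is_mon B"
  shows "sheaf_union A B = (\<lambda>a. A a \<union> B a)"
proof
  fix a
  show "sheaf_union A B a = A a \<union> B a"
  proof (cases "a = bot")
    case True
    then show ?thesis
      by (simp add: sheaf_union_def Lop_def)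
  next
    case False
    have "A a \<union> B a \<subseteq> A b \<union> B b" if "b < a" for b
      using antimonoD[OF is_mon_antimono[OF assms(1)] less_imp_le[OF that]]
        antimonoD[OF is_mon_antimono[OF assms(2)] less_imp_le[OF that]] by blast
    then have "{x. \<forall>b<a. x \<in> A b \<union> B b} = A a \<union> B a"
      using mem_union_if_mem_union_below[OF assms False] by blast
    with False show ?thesis
      by (simp add: sheaf_union_def Lop_def)
  qed
qed

lemma is_mon_union:
  fixes A B :: "'l::{complete_linorder, dense_order} \<Rightarrow> 'x set"
  assumes A: "is_mon A" and B: "is_mon B"
  shows "is_mon (\<lambda>a. A a \<union> B a)"
proof -
  have antiA: "antimono A" and antiB: "antimono B"
    by (simp_all add: A B is_mon_antimono)
  have "y \<in> A (Sup T) \<union> B (Sup T)" if ne: "T \<noteq> {}" and y: "\<forall>c\<in>T. y \<in> A c \<union> B c" for T y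
  proof (cases "Sup T = bot")
    case True
    obtain c where c: "c \<in> T"
      using ne by blast
    have "Sup T = c"
      using Sup_upper[OF c] True by (metis bot_unique)
    with c y show ?thesis
      by auto
  next
    case False
    have "y \<in> A b \<union> B b" if "b < Sup T" for b
    proof -
      obtain c where c: "c \<in> T" "b < c"
        using \<open>b < Sup T\<close> by (auto simp: less_Sup_iff)
      then have "b \<le> c"
        by (simp add: less_imp_le)
      with c y show ?thesis
        using antimonoD[OF antiA] antimonoD[OF antiB] by blast
    qed
    with False show ?thesis
      using mem_union_if_mem_union_below[OF A B] by blast
  qed
  moreover have "antimono (\<lambda>a. A a \<union> B a)"
    using antiA antiB by (intro antimonoI) (auto dest: antimonoD)
  ultimately show ?thesis
    unfolding is_mon_iff by blast
qed

lemma monP_union: "monP (\<lambda>a. A a \<union> B a) u = monP A u \<union> monP B u"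
  by (cases u) (auto simp: monP_def)

lemma monP_sec_inter: "monP (sec_inter A B) u = monP A u \<inter> monP B u"
  by (cases u) (auto simp: monP_def sec_inter_def)

lemma monRes_mem_monP:
  assumes "antimono A" and "le_plus v u" and "x \<in> monP A u"
  shows "monRes u v x \<in> monP A v"
  using assms by (cases v; cases u) (auto simp: monRes_def monP_def dest: antimonoD)

lemma mon_hom_incl: "(\<And>a. A a \<subseteq> C a) \<Longrightarrow> mon_hom A C incl"
  unfolding mon_hom_def nat_trans_def incl_def
  by (auto simp: monP_def split: option.splits)

definition mon_copair ::
  "('l \<Rightarrow> 'x set) \<Rightarrow> ('l option \<Rightarrow> 'x option \<Rightarrow> 'z) \<Rightarrow> ('l option \<Rightarrow> 'x option \<Rightarrow> 'z) \<Rightarrow>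
   'l option \<Rightarrow> 'x option \<Rightarrow> 'z" where
  "mon_copair A f g u x = (if x \<in> monP A u then f u x else g u x)"

lemma mon_hom_eq_copair_left: "mon_hom_eq A (mon_copair A f g) f"
  by (simp add: mon_hom_eq_def mon_copair_def)

lemma mon_hom_eq_copair_right:
  "mon_hom_eq (sec_inter A B) f g \<Longrightarrow> mon_hom_eq B (mon_copair A f g) g"
  by (simp add: mon_hom_eq_def mon_copair_def monP_sec_inter)

lemma mon_hom_copair:
  fixes A B :: "'l::linorder \<Rightarrow> 'x set"
  assumes antiA: "antimono A" and antiB: "antimono B"
    and f: "mon_hom A G f" and g: "mon_hom B G g"
    and agree: "mon_hom_eq (sec_inter A B) f g"
  shows "mon_hom (\<lambda>a. A a \<union> B a) G (mon_copair A f g)"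
  unfolding mon_hom_def nat_trans_def monP_union
proof (intro conjI allI impI)
  show "mon_copair A f g u x \<in> monP G u" if "x \<in> monP A u \<union> monP B u" for u x
    using that f g by (auto simp: mon_copair_def mon_hom_def nat_trans_def)
next
  fix u v x assume le: "le_plus v u" and x: "x \<in> monP A u \<union> monP B u"
  have fg: "f w z = g w z" if "z \<in> monP A w" "z \<in> monP B w" for w z
    using agree that by (simp add: mon_hom_eq_def monP_sec_inter)
  show "mon_copair A f g v (monRes u v x) = monRes u v (mon_copair A f g u x)"
  proof (cases "x \<in> monP A u")
    case True
    then show ?thesis
      using f le monRes_mem_monP[OF antiA le]
      by (simp add: mon_copair_def mon_hom_def nat_trans_def)
  next
    case False
    with x have "x \<in> monP B u" by blast
    then show ?thesis
      using False g le fg monRes_mem_monP[OF antiB le]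
      by (simp add: mon_copair_def mon_hom_def nat_trans_def)
  qed
qed

lemma mon_hom_eq_copair_unique:
  "mon_hom_eq A h f \<Longrightarrow> mon_hom_eq B h g \<Longrightarrow> mon_hom_eq (\<lambda>a. A a \<union> B a) h (mon_copair A f g)"
  by (auto simp: mon_hom_eq_def mon_copair_def monP_union)

lemma psi_union: "psi (\<lambda>a. A a \<union> B a) y = max (psi A y) (psi B y)"
  for A B :: "'l::complete_linorder \<Rightarrow> 'x set"
proof -
  have "{b. y \<in> A b \<union> B b} = {b. y \<in> A b} \<union> {b. y \<in> B b}"
    by auto
  then show ?thesis
    unfolding psi_def by (simp add: Sup_union_distrib sup_max)
qed

lemma psi_eq_bot: "antimono A \<Longrightarrow> y \<notin> A bot \<Longrightarrow> psi A y = bot"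
  for A :: "'l::complete_lattice \<Rightarrow> 'x set"
  by (auto simp: psi_def dest: antimonoD[of A bot])

theorem mainTheorem11:
  fixes F A B :: "'l::{complete_linorder, dense_order} \<Rightarrow> 'x set"
  assumes "is_mon F"
    and "subsheaf A F" and "subsheaf B F"
  shows "is_mon (sec_inter A B) \<and> is_mon (sheaf_union A B)
    \<and> mon_hom (sec_inter A B) A incl \<and> mon_hom (sec_inter A B) B incl
    \<and> mon_hom A (sheaf_union A B) incl \<and> mon_hom B (sheaf_union A B) incl
    \<and> (\<forall>(G :: 'l \<Rightarrow> 'z set) f g. is_mon G \<longrightarrow> mon_hom A G f \<longrightarrow> mon_hom B G g \<longrightarrow>
          mon_hom_eq (sec_inter A B) f g \<longrightarrow>
          (\<exists>h. mon_hom (sheaf_union A B) G h \<and> mon_hom_eq A h f \<and> mon_hom_eq B h g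
               \<and> (\<forall>h'. mon_hom (sheaf_union A B) G h' \<longrightarrow> mon_hom_eq A h' f \<longrightarrow>
                       mon_hom_eq B h' g \<longrightarrow> mon_hom_eq (sheaf_union A B) h' h)))
    \<and> sheaf_union A B bot = A bot \<union> B bot
    \<and> (\<forall>y \<in> A bot \<union> B bot. psi (sheaf_union A B) y =
          (if y \<in> A bot \<and> y \<in> B bot then max (psi A y) (psi B y)
           else if y \<in> A bot then psi A y else psi B y))"
proof -
  have A: "is_mon A" and B: "is_mon B"
    using assms by (auto simp: subsheaf_def)
  have antiA: "antimono A" and antiB: "antimono B"
    by (simp_all add: A B is_mon_antimono)
  have incl: "mon_hom (sec_inter A B) A incl" "mon_hom (sec_inter A B) B incl"
    "mon_hom A (\<lambda>a. A a \<union> B a) incl" "mon_hom B (\<lambda>a. A a \<union> B a) incl"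
    by (auto intro!: mon_hom_incl simp: sec_inter_def)
  have pushout: "\<forall>(G :: 'l \<Rightarrow> 'z set) f g. is_mon G \<longrightarrow> mon_hom A G f \<longrightarrow> mon_hom B G g \<longrightarrow>
      mon_hom_eq (sec_inter A B) f g \<longrightarrow>
      (\<exists>h. mon_hom (\<lambda>a. A a \<union> B a) G h \<and> mon_hom_eq A h f \<and> mon_hom_eq B h g
        \<and> (\<forall>h'. mon_hom (\<lambda>a. A a \<union> B a) G h' \<longrightarrow> mon_hom_eq A h' f \<longrightarrow>
                mon_hom_eq B h' g \<longrightarrow> mon_hom_eq (\<lambda>a. A a \<union> B a) h' h))"
    using mon_hom_copair[OF antiA antiB] mon_hom_eq_copair_left mon_hom_eq_copair_right
      mon_hom_eq_copair_unique by blast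
  have psi: "\<forall>y \<in> A bot \<union> B bot. psi (\<lambda>a. A a \<union> B a) y =
      (if y \<in> A bot \<and> y \<in> B bot then max (psi A y) (psi B y)
       else if y \<in> A bot then psi A y else psi B y)"
    by (simp add: psi_union psi_eq_bot[OF antiA] psi_eq_bot[OF antiB])
  show ?thesis
    unfolding sheaf_union_eq[OF A B]
    using is_mon_sec_inter[OF A B] is_mon_union[OF A B] incl pushout psi by simp
qed

end
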